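(* Consider any realized trajectory of the patient model in the context, let $\lambda_1>0$, $z_t:=[x_t\ u_t^\top\ d_t^\top]^\top$ and $\bar V_t:=\lambda_1I_{2M+1}+\sum_{s=1}^{t-1}z_sz_s^\top$. Then $$\sum_{t=1}^T\|z_t\|^2_{\bar V_t^{-1}}\leq(2M+1)\log\Big(1+\frac{T(C_x^2+2)}{(2M+1)\lambda_1}\Big)\Big[2+\frac{C_x^2+2}{\log(2)\lambda_1}\Big],$$ where $C_x:=\frac{\bar b+\bar c+\bar w}{1-\bar a}$.
   Context: Patient model: $M\geq1$ treatments; $\mathcal U:=\{v\in\{0,1\}^M:\|v\|_0\leq1\}$. $x_{t+1}=ax_t+b^\top u_t+c^\top d_t+w_t$ with actions $u_t\in\mathcal U$ and adherence $d_t\in\mathcal U$, $d^i_t\mid x_t,u^i_t\sim\mathrm{Bernoulli}(u^i_t\sigma(x_t+\mu_i))$, $\sigma$ the sigmoid; $x_1$ distributed as the noise. Parameters $a\in[0,\bar a]$ (known $\bar a\in(0,1)$), $\|b\|_\infty\leq\bar b$, $\|c\|_\infty\leq\bar c$, $\mu\in[-\bar\mu,\bar\mu]^M$. Noise i.i.d., zero-symmetric, $\sigma_s^2$-subgaussian, $|w_t|\leq\bar w$ ($\bar w>0$), log-concave density, known variance. $\|v\|_A:=\sqrt{v^\top Av}$. *)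

theory Defs
  imports Complex_Main "Jordan_Normal_Form.Gauss_Jordan_Elimination"
begin

definition treat_set :: "nat \<Rightarrow> real vec set" where
  "treat_set M = {v \<in> carrier_vec M. (\<forall>i<M. v $ i \<in> {0, 1}) \<and> card {i. i < M \<and> v $ i \<noteq> 0} \<le> 1}"

definition sup_norm_le :: "nat \<Rightarrow> real vec \<Rightarrow> real \<Rightarrow> bool" where
  "sup_norm_le M v r \<longleftrightarrow> v \<in> carrier_vec M \<and> (\<forall>i<M. \<bar>v $ i\<bar> \<le> r)"

definition zvec :: "real \<Rightarrow> real vec \<Rightarrow> real vec \<Rightarrow> real vec" where
  "zvec xt ut dt = vec 1 (\<lambda>_. xt) @\<^sub>v ut @\<^sub>v dt"

definition Vbar :: "nat \<Rightarrow> real \<Rightarrow> (nat \<Rightarrow> real vec) \<Rightarrow> nat \<Rightarrow> real mat" where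
  "Vbar n lam z t = lam \<cdot>\<^sub>m 1\<^sub>m n + mat n n (\<lambda>(i, j). \<Sum>s\<in>{1..<t}. z s $ i * z s $ j)"

text \<open>Matrix inverse (the library's Gauss-Jordan inverse; Vbar is positive definite hence invertible).\<close>
definition minv :: "real mat \<Rightarrow> real mat" where
  "minv A = the (mat_inverse A)"

definition wnorm_sq :: "real vec \<Rightarrow> real mat \<Rightarrow> real" where
  "wnorm_sq v A = v \<bullet> (A *\<^sub>v v)"

end

theory Submission
  imports Defs "Jordan_Normal_Form.Schur_Decomposition"
begin

text \<open>
  Write \<open>y\<^sub>t = \<parallel>z\<^sub>t\<parallel>\<^sup>2\<^sub>V\<^sub>t\<^sup>-\<^sup>1\<close>. The matrix determinant lemma gives
  \<open>det V\<^sub>T\<^sub>+\<^sub>1 = \<lambda>\<^sub>1\<^sup>n \<Prod>\<^sub>t (1 + y\<^sub>t)\<close>, and since \<open>V\<^sub>T\<^sub>+\<^sub>1\<close> is positive definite,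
  AM-GM on its eigenvalues bounds the determinant by \<open>(tr V\<^sub>T\<^sub>+\<^sub>1 / n)\<^sup>n\<close>.
  The state stays in \<open>[-C\<^sub>x, C\<^sub>x]\<close> and actions and adherences are 0/1 vectors with
  at most one nonzero entry, so \<open>\<parallel>z\<^sub>t\<parallel>\<^sup>2 \<le> C\<^sub>x\<^sup>2 + 2\<close>; this bounds the trace and
  shows \<open>y\<^sub>t \<le> (C\<^sub>x\<^sup>2 + 2) / \<lambda>\<^sub>1\<close>. Finally \<open>y \<le> (2 + B / ln 2) ln (1 + y)\<close> for
  \<open>0 \<le> y \<le> B\<close> turns the bound on \<open>\<Sum>\<^sub>t ln (1 + y\<^sub>t)\<close> into one on \<open>\<Sum>\<^sub>t y\<^sub>t\<close>.
\<close>

section \<open>Trace, determinant and spectrum\<close>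

definition mat_trace :: "'a::comm_ring_1 mat \<Rightarrow> 'a" where
  "mat_trace A = (\<Sum>i<dim_row A. A $$ (i, i))"

lemma mat_trace_mult_comm:
  assumes A: "A \<in> carrier_mat n m" and B: "B \<in> carrier_mat m n"
  shows "mat_trace (A * B) = mat_trace (B * A)"
proof -
  have "mat_trace (A * B) = (\<Sum>i<n. \<Sum>k<m. A $$ (i, k) * B $$ (k, i))"
    unfolding mat_trace_def using A B
    by (auto simp: scalar_prod_def atLeast0LessThan intro!: sum.cong)
  also have "\<dots> = (\<Sum>k<m. \<Sum>i<n. B $$ (k, i) * A $$ (i, k))"
    by (subst sum.swap) (simp add: mult.commute)
  also have "\<dots> = mat_trace (B * A)"
    unfolding mat_trace_def using A B
    by (auto simp: scalar_prod_def atLeast0LessThan intro!: sum.cong)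
  finally show ?thesis .
qed

lemma mat_trace_similar_mat_wit:
  assumes A: "A \<in> carrier_mat n n" and sim: "similar_mat_wit A B P Q"
  shows "mat_trace A = mat_trace B"
proof -
  note d = similar_mat_witD2[OF A sim]
  have "mat_trace A = mat_trace (P * (B * Q))"
    using d by (simp add: assoc_mult_mat[of P n n B n Q n])
  also have "\<dots> = mat_trace ((B * Q) * P)"
    using d by (intro mat_trace_mult_comm[of _ n n]) auto
  also have "\<dots> = mat_trace (B * (Q * P))"
    using d by (simp add: assoc_mult_mat[of B n n Q n P n])
  also have "\<dots> = mat_trace B"
    using d by simp
  finally show ?thesis .
qed

lemma mat_trace_eq_sum_list_diag_mat: "mat_trace A = sum_list (diag_mat A)"
  unfolding mat_trace_def diag_mat_def
  by (simp add: sum_set_upt_conv_sum_list_nat[symmetric] atLeast0LessThan)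

lemma ln_prod_list_le:
  fixes xs :: "real list" and m :: real
  assumes "\<forall>x\<in>set xs. x > 0" and m: "m > 0"
  shows "ln (prod_list xs) \<le> length xs * ln m + sum_list xs / m - length xs"
  using assms(1)
proof (induction xs)
  case Nil
  then show ?case by simp
next
  case (Cons x xs)
  have x: "x > 0" and xs: "\<forall>x\<in>set xs. x > 0" using Cons.prems by auto
  have "prod_list xs > 0" using xs by (induction xs) auto
  then have "ln (prod_list (x # xs)) = ln x + ln (prod_list xs)"
    using x by (simp add: ln_mult_pos)
  moreover have "ln x \<le> ln m + x / m - 1"
    using ln_le_minus_one[of "x / m"] x m by (simp add: ln_div)
  ultimately show ?case
    using Cons.IH[OF xs] by (simp add: algebra_simps add_divide_distrib)
qed

lemma prod_list_le_mean_power: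
  fixes xs :: "real list"
  assumes pos: "\<forall>x\<in>set xs. x > 0" and n: "length xs = n" "n > 0"
  shows "prod_list xs \<le> (sum_list xs / n) ^ n"
proof -
  define m where "m = sum_list xs / n"
  have "sum_list xs > 0"
    using pos n by (cases xs) (auto simp: add_pos_nonneg sum_list_nonneg less_imp_le)
  then have m: "m > 0" and "sum_list xs / m = n"
    using n by (simp_all add: m_def)
  then have "ln (prod_list xs) \<le> ln (m ^ n)"
    using ln_prod_list_le[OF pos m] n by (simp add: ln_realpow)
  moreover have "prod_list xs > 0"
    using pos by (induction xs) auto
  ultimately show ?thesis
    using m by (simp add: m_def)
qed

lemma positive_real_spectrum:
  fixes V :: "real mat"
  assumes V: "V \<in> carrier_mat n n"
    and pos: "\<And>e. eigenvalue (map_mat complex_of_real V) e \<Longrightarrow> \<exists>r>0. e = complex_of_real r"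
  obtains rs where "length rs = n" "\<forall>r\<in>set rs. r > 0"
    "det V = prod_list rs" "mat_trace V = sum_list rs"
proof -
  define A where "A = map_mat complex_of_real V"
  have A: "A \<in> carrier_mat n n" using V by (simp add: A_def)
  obtain es where es: "char_poly A = (\<Prod>a\<leftarrow>es. [:- a, 1:])" "length es = n"
    using char_poly_factorized[OF A] by blast
  obtain B P Q where "schur_decomposition A es = (B, P, Q)"
    by (cases "schur_decomposition A es") auto
  from schur_decomposition[OF A es(1) this]
  have sim: "similar_mat_wit A B P Q" and ut: "upper_triangular B" and dg: "diag_mat B = es"
    by auto
  have "det A = prod_list es"
    using det_similar[of A B] sim det_upper_triangular[OF ut] similar_mat_witD2[OF A sim] dg
    unfolding similar_mat_def by auto
  moreover have "mat_trace A = sum_list es"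
    using mat_trace_similar_mat_wit[OF A sim] dg by (simp add: mat_trace_eq_sum_list_diag_mat)
  moreover have real_pos: "\<exists>r>0. e = complex_of_real r" if "e \<in> set es" for e
  proof -
    have "poly (char_poly A) e = 0"
      unfolding es(1) using that by (induction es) auto
    then show ?thesis
      using eigenvalue_root_char_poly[OF A] pos A_def by simp
  qed
  define rs where "rs = map Re es"
  have es_rs: "es = map complex_of_real rs"
    unfolding rs_def using real_pos by (induction es) fastforce+
  have "complex_of_real (det V) = det A"
    unfolding A_def by (simp add: of_real_hom.hom_det)
  moreover have "complex_of_real (mat_trace V) = mat_trace A"
    unfolding A_def mat_trace_def using V by simp
  ultimately have "det V = prod_list rs" "mat_trace V = sum_list rs"
    unfolding es_rs by (simp_all add: of_real_hom.prod_list_map_hom of_real_hom.sum_list_map_hom)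
  moreover have "\<forall>r\<in>set rs. r > 0"
    unfolding rs_def using real_pos by fastforce
  ultimately show ?thesis
    using that es(2) es_rs by simp
qed

lemma det_le_mat_trace_power:
  fixes V :: "real mat"
  assumes V: "V \<in> carrier_mat n n" and n: "n > 0"
    and pos: "\<And>e. eigenvalue (map_mat complex_of_real V) e \<Longrightarrow> \<exists>r>0. e = complex_of_real r"
  shows "det V \<le> (mat_trace V / n) ^ n"
proof -
  obtain rs where "length rs = n" "\<forall>r\<in>set rs. r > 0"
    and "det V = prod_list rs" "mat_trace V = sum_list rs"
    using positive_real_spectrum[OF V pos] by blast
  then show ?thesis
    using prod_list_le_mean_power[of rs n] n by simp
qed

section \<open>The matrix determinant lemma\<close>

lemma det_four_block_mat_one_eq_schur:
  fixes A :: "'a::idom mat"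
  assumes A: "A \<in> carrier_mat n n" and B: "B \<in> carrier_mat n m" and C: "C \<in> carrier_mat m n"
  shows "det (four_block_mat A B C (1\<^sub>m m)) = det (A - B * C)"
proof -
  have "four_block_mat (A - B * C) B (0\<^sub>m m n) (1\<^sub>m m) * four_block_mat (1\<^sub>m n) (0\<^sub>m n m) C (1\<^sub>m m)
      = four_block_mat ((A - B * C) * 1\<^sub>m n + B * C) ((A - B * C) * 0\<^sub>m n m + B * 1\<^sub>m m)
          (0\<^sub>m m n * 1\<^sub>m n + 1\<^sub>m m * C) (0\<^sub>m m n * 0\<^sub>m n m + 1\<^sub>m m * 1\<^sub>m m)"
    using A B C by (intro mult_four_block_mat) auto
  also have "\<dots> = four_block_mat A B C (1\<^sub>m m)"
    using A B C by (auto intro!: arg_cong4[where f = four_block_mat] eq_matI)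
  finally have "det (four_block_mat A B C (1\<^sub>m m))
      = det (four_block_mat (A - B * C) B (0\<^sub>m m n) (1\<^sub>m m))
        * det (four_block_mat (1\<^sub>m n) (0\<^sub>m n m) C (1\<^sub>m m))"
    using A B C by (metis det_mult four_block_carrier_mat minus_carrier_mat mult_carrier_mat
        one_carrier_mat zero_carrier_mat)
  moreover have "A - B * C \<in> carrier_mat n n"
    using A B C by auto
  then have "det (four_block_mat (A - B * C) B (0\<^sub>m m n) (1\<^sub>m m)) = det (A - B * C)"
    using det_four_block_mat_lower_left_zero[of "A - B * C" n B m "0\<^sub>m m n" "1\<^sub>m m"] A B C by simp
  ultimately show ?thesis
    using C det_four_block_mat_upper_right_zero[of "1\<^sub>m n" n _ m C] by simp
qed

lemma det_four_block_mat_one_eq_det_mult_schur: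
  fixes A :: "'a::idom mat"
  assumes A: "A \<in> carrier_mat n n" and W: "W \<in> carrier_mat n n" and AW: "A * W = 1\<^sub>m n"
    and B: "B \<in> carrier_mat n m" and C: "C \<in> carrier_mat m n"
  shows "det (four_block_mat A B C (1\<^sub>m m)) = det A * det (1\<^sub>m m - C * (W * B))"
proof -
  have "A * (W * B) = B"
    using A W B AW by (simp add: assoc_mult_mat[symmetric, of A n n W n B m])
  then have "four_block_mat A (0\<^sub>m n m) C (1\<^sub>m m)
        * four_block_mat (1\<^sub>m n) (W * B) (0\<^sub>m m n) (1\<^sub>m m - C * (W * B))
      = four_block_mat A B C (1\<^sub>m m)"
    using A W B C by (subst mult_four_block_mat[of _ n n _ m _ m _ _ n _ m])
      (auto intro!: arg_cong4[where f = four_block_mat] eq_matI)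
  then have "det (four_block_mat A B C (1\<^sub>m m))
      = det (four_block_mat A (0\<^sub>m n m) C (1\<^sub>m m))
        * det (four_block_mat (1\<^sub>m n) (W * B) (0\<^sub>m m n) (1\<^sub>m m - C * (W * B)))"
    using A W B C by (metis det_mult four_block_carrier_mat minus_carrier_mat mult_carrier_mat
        one_carrier_mat zero_carrier_mat)
  moreover have "1\<^sub>m m - C * (W * B) \<in> carrier_mat m m"
    using W B C by auto
  then have "det (four_block_mat (1\<^sub>m n) (W * B) (0\<^sub>m m n) (1\<^sub>m m - C * (W * B)))
      = det (1\<^sub>m m - C * (W * B))"
    using det_four_block_mat_lower_left_zero[of "1\<^sub>m n" n "W * B" m "0\<^sub>m m n"
        "1\<^sub>m m - C * (W * B)"] W B C
    by simp
  ultimately show ?thesis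
    using A C det_four_block_mat_upper_right_zero[of A n _ m C] by simp
qed

definition outer_mat :: "nat \<Rightarrow> 'a::comm_ring_1 vec \<Rightarrow> 'a mat" where
  "outer_mat n v = mat n n (\<lambda>(i, j). v $ i * v $ j)"

lemma outer_mat_carrier [simp]: "outer_mat n v \<in> carrier_mat n n"
  unfolding outer_mat_def by simp

lemma dim_outer_mat [simp]: "dim_row (outer_mat n v) = n" "dim_col (outer_mat n v) = n"
  unfolding outer_mat_def by simp_all

lemma det_add_outer_mat:
  fixes V W :: "'a::idom mat"
  assumes V: "V \<in> carrier_mat n n" and W: "W \<in> carrier_mat n n"
    and VW: "V * W = 1\<^sub>m n" and z: "z \<in> carrier_vec n"
  shows "det (V + outer_mat n z) = det V * (1 + z \<bullet> (W *\<^sub>v z))"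
proof -
  define Zc where "Zc = mat_of_cols n [z]"
  define Zr where "Zr = mat_of_rows n [z]"
  have Zc: "Zc \<in> carrier_mat n 1" and Zr: "- Zr \<in> carrier_mat 1 n"
    unfolding Zc_def Zr_def by auto
  have "V + outer_mat n z = V - Zc * - Zr"
    using V Zc Zr by (intro eq_matI) (auto simp: Zc_def Zr_def outer_mat_def mat_of_cols_def
        mat_of_rows_def scalar_prod_def)
  moreover have "1\<^sub>m 1 - - Zr * (W * Zc) = mat 1 1 (\<lambda>_. 1 + z \<bullet> (W *\<^sub>v z))"
    using W z Zc Zr by (intro eq_matI) (auto simp: Zc_def Zr_def mat_of_cols_def mat_of_rows_def
        scalar_prod_def mult_mat_vec_def row_def col_def sum_negf)
  ultimately show ?thesis
    using det_four_block_mat_one_eq_schur[OF V Zc Zr]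
      det_four_block_mat_one_eq_det_mult_schur[OF V W VW Zc Zr]
    by (simp add: det_single)
qed

lemma minv_right_inverse:
  assumes A: "A \<in> carrier_mat n n" and det: "det A \<noteq> 0"
  shows "minv A \<in> carrier_mat n n" "A * minv A = 1\<^sub>m n"
proof -
  have "A \<in> Units (ring_mat TYPE(real) n ())"
    using det_non_zero_imp_unit[OF A det] .
  then obtain W where W: "mat_inverse A = Some W"
    using mat_inverse(1)[OF A, of "()"] by blast
  from mat_inverse(2)[OF A W] W show "minv A \<in> carrier_mat n n" "A * minv A = 1\<^sub>m n"
    unfolding minv_def by auto
qed

section \<open>The regularized design matrix\<close>

lemma Vbar_carrier [simp]: "Vbar n lam z t \<in> carrier_mat n n"
  unfolding Vbar_def by auto

lemma dim_Vbar [simp]: "dim_row (Vbar n lam z t) = n" "dim_col (Vbar n lam z t) = n"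
  unfolding Vbar_def by auto

lemma Vbar_index:
  assumes "i < n" "j < n"
  shows "Vbar n lam z t $$ (i, j)
    = lam * (if i = j then 1 else 0) + (\<Sum>s\<in>{1..<t}. z s $ i * z s $ j)"
  using assms unfolding Vbar_def by auto

lemma Vbar_1: "Vbar n lam z 1 = lam \<cdot>\<^sub>m 1\<^sub>m n"
  by (rule eq_matI) (auto simp: Vbar_index)

lemma Vbar_Suc:
  assumes "1 \<le> t"
  shows "Vbar n lam z (Suc t) = Vbar n lam z t + outer_mat n (z t)"
  by (rule eq_matI) (use assms in \<open>auto simp: Vbar_index outer_mat_def\<close>)

lemma Vbar_mult_vec_index:
  assumes v: "v \<in> carrier_vec n" and i: "i < n"
  shows "(Vbar n lam z t *\<^sub>v v) $ i = lam * v $ i + (\<Sum>s\<in>{1..<t}. z s $ i * (z s \<bullet> v))"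
proof -
  define S where "S = {1..<t}"
  have "(Vbar n lam z t *\<^sub>v v) $ i = (\<Sum>j<n. Vbar n lam z t $$ (i, j) * v $ j)"
    using v i by (simp add: mult_mat_vec_def scalar_prod_def atLeast0LessThan)
  also have "\<dots> = (\<Sum>j<n. (if i = j then lam * v $ j else 0)
      + (\<Sum>s\<in>S. z s $ i * (z s $ j * v $ j)))"
    using i by (intro sum.cong refl)
      (simp add: Vbar_index S_def distrib_right sum_distrib_right mult.assoc)
  also have "\<dots> = lam * v $ i + (\<Sum>s\<in>S. z s $ i * (z s \<bullet> v))"
    using i v by (simp add: sum.distrib sum.swap[of _ S] sum_distrib_left scalar_prod_def
        atLeast0LessThan)
  finally show ?thesis
    unfolding S_def .
qed

lemma Vbar_quadratic_form:
  assumes v: "v \<in> carrier_vec n"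
  shows "v \<bullet> (Vbar n lam z t *\<^sub>v v) = lam * (v \<bullet> v) + (\<Sum>s\<in>{1..<t}. (z s \<bullet> v)\<^sup>2)"
proof -
  define S where "S = {1..<t}"
  have "v \<bullet> (Vbar n lam z t *\<^sub>v v) = (\<Sum>i<n. v $ i * (Vbar n lam z t *\<^sub>v v) $ i)"
    using v by (simp add: scalar_prod_def atLeast0LessThan)
  also have "\<dots> = (\<Sum>i<n. lam * (v $ i * v $ i))
      + (\<Sum>i<n. \<Sum>s\<in>S. (z s $ i * v $ i) * (z s \<bullet> v))"
    using Vbar_mult_vec_index[OF v] unfolding S_def
    by (simp add: sum.distrib distrib_left sum_distrib_left algebra_simps)
  also have "(\<Sum>i<n. \<Sum>s\<in>S. (z s $ i * v $ i) * (z s \<bullet> v)) = (\<Sum>s\<in>S. (z s \<bullet> v)\<^sup>2)"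
    using v by (subst sum.swap)
      (simp add: sum_distrib_right[symmetric] scalar_prod_def atLeast0LessThan power2_eq_square)
  also have "(\<Sum>i<n. lam * (v $ i * v $ i)) = lam * (v \<bullet> v)"
    using v by (simp add: sum_distrib_left scalar_prod_def atLeast0LessThan)
  finally show ?thesis
    unfolding S_def .
qed

lemma of_real_Vbar_mult_vec_index:
  assumes v: "v \<in> carrier_vec n" and i: "i < n"
  shows "(map_mat complex_of_real (Vbar n lam z t) *\<^sub>v v) $ i
    = lam * v $ i + (\<Sum>s\<in>{1..<t}. z s $ i * (\<Sum>j<n. z s $ j * v $ j))"
proof -
  define S where "S = {1..<t}"
  have "(map_mat complex_of_real (Vbar n lam z t) *\<^sub>v v) $ i
      = (\<Sum>j<n. complex_of_real (Vbar n lam z t $$ (i, j)) * v $ j)"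
    using v i by (simp add: mult_mat_vec_def scalar_prod_def atLeast0LessThan)
  also have "\<dots> = (\<Sum>j<n. (if i = j then lam * v $ j else 0)
      + (\<Sum>s\<in>S. z s $ i * (z s $ j * v $ j)))"
    using i by (intro sum.cong refl)
      (simp add: Vbar_index S_def of_real_sum distrib_right sum_distrib_right mult.assoc)
  also have "\<dots> = lam * v $ i + (\<Sum>s\<in>S. z s $ i * (\<Sum>j<n. z s $ j * v $ j))"
    using i by (simp add: sum.distrib sum.swap[of _ S] sum_distrib_left)
  finally show ?thesis
    unfolding S_def .
qed

lemma of_real_Vbar_hermitian_form:
  assumes v: "v \<in> carrier_vec n"
  shows "(\<Sum>i<n. cnj (v $ i) * (map_mat complex_of_real (Vbar n lam z t) *\<^sub>v v) $ i)
    = lam * (\<Sum>i<n. (cmod (v $ i))\<^sup>2) + (\<Sum>s\<in>{1..<t}. (cmod (\<Sum>j<n. z s $ j * v $ j))\<^sup>2)"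
proof -
  define S where "S = {1..<t}"
  define w where "w s = (\<Sum>j<n. complex_of_real (z s $ j) * v $ j)" for s
  have "(\<Sum>i<n. cnj (v $ i) * (map_mat complex_of_real (Vbar n lam z t) *\<^sub>v v) $ i)
      = (\<Sum>i<n. complex_of_real lam * (cnj (v $ i) * v $ i))
        + (\<Sum>i<n. \<Sum>s\<in>S. (complex_of_real (z s $ i) * cnj (v $ i)) * w s)"
    using of_real_Vbar_mult_vec_index[OF v] unfolding S_def w_def
    by (simp add: sum.distrib distrib_left sum_distrib_left algebra_simps)
  also have "(\<Sum>i<n. \<Sum>s\<in>S. (complex_of_real (z s $ i) * cnj (v $ i)) * w s)
      = (\<Sum>s\<in>S. cnj (w s) * w s)"
    using cnj_sum[of _ "{..<n}"] unfolding w_def[of s for s]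
    by (subst sum.swap) (simp add: sum_distrib_right)
  finally show ?thesis
    unfolding S_def w_def
    by (simp add: sum_distrib_left complex_norm_square[unfolded of_real_power] mult.commute)
qed

text \<open>
  The eigenvalue equation \<open>A v = e v\<close> paired with \<open>v\<^sup>*\<close> gives
  \<open>e \<parallel>v\<parallel>\<^sup>2 = \<lambda> \<parallel>v\<parallel>\<^sup>2 + \<Sum>\<^sub>s \<bar>z\<^sub>s\<^sup>T v\<bar>\<^sup>2\<close>.
\<close>
lemma Vbar_eigenvalue_pos:
  assumes lam: "lam > 0"
    and e: "eigenvalue (map_mat complex_of_real (Vbar n lam z t)) e"
  shows "\<exists>r>0. e = complex_of_real r"
proof -
  define A where "A = map_mat complex_of_real (Vbar n lam z t)"
  obtain v where "eigenvector A v e"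
    using e unfolding eigenvalue_def A_def by blast
  then have v: "v \<in> carrier_vec n" and v0: "v \<noteq> 0\<^sub>v n" and Av: "A *\<^sub>v v = e \<cdot>\<^sub>v v"
    unfolding eigenvector_def A_def by auto
  define Nr where "Nr = (\<Sum>i<n. (cmod (v $ i))\<^sup>2)"
  define Sr where "Sr = (\<Sum>s\<in>{1..<t}. (cmod (\<Sum>j<n. z s $ j * v $ j))\<^sup>2)"
  have "(\<Sum>i<n. cnj (v $ i) * (A *\<^sub>v v) $ i) = e * complex_of_real Nr"
    using Av v unfolding Nr_def
    by (simp add: sum_distrib_left complex_norm_square[unfolded of_real_power] algebra_simps)
  then have eq: "e * complex_of_real Nr = complex_of_real (lam * Nr + Sr)"
    using of_real_Vbar_hermitian_form[OF v, of lam z t] unfolding A_def Nr_def Sr_def by simp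
  obtain i where "i < n" "v $ i \<noteq> 0"
    using v v0 by (metis eq_vecI carrier_vecD index_zero_vec)
  then have Nr: "Nr > 0"
    unfolding Nr_def by (intro sum_pos2[of _ i]) auto
  have "Sr \<ge> 0"
    unfolding Sr_def by (simp add: sum_nonneg)
  then have "(lam * Nr + Sr) / Nr > 0"
    using Nr lam by (intro divide_pos_pos add_pos_nonneg mult_pos_pos)
  moreover have "e = complex_of_real ((lam * Nr + Sr) / Nr)"
    using eq Nr by (simp add: field_simps)
  ultimately show ?thesis by blast
qed

lemma det_Vbar_pos:
  assumes "lam > 0"
  shows "0 < det (Vbar n lam z t)"
proof -
  have "\<And>e. eigenvalue (map_mat complex_of_real (Vbar n lam z t)) e \<Longrightarrow> \<exists>r>0. e = complex_of_real r"
    by (rule Vbar_eigenvalue_pos[OF assms])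
  then obtain rs where rs: "\<forall>r\<in>set rs. r > 0" and "det (Vbar n lam z t) = prod_list rs"
    using positive_real_spectrum[OF Vbar_carrier] by blast
  moreover have "0 < prod_list rs"
    using rs by (induction rs) auto
  ultimately show ?thesis
    by simp
qed

lemma Vbar_minv:
  assumes "lam > 0"
  shows "minv (Vbar n lam z t) \<in> carrier_mat n n" "Vbar n lam z t * minv (Vbar n lam z t) = 1\<^sub>m n"
  using minv_right_inverse[OF Vbar_carrier, of n lam z t] det_Vbar_pos[OF assms, of n z t]
  by simp_all

lemma two_scalar_prod_le:
  fixes v q :: "real vec"
  assumes v: "v \<in> carrier_vec n" and q: "q \<in> carrier_vec n" and lam: "lam > 0"
  shows "2 * (v \<bullet> q) \<le> (v \<bullet> v) / lam + lam * (q \<bullet> q)"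
proof -
  have "2 * (v \<bullet> q) = (\<Sum>i<n. 2 * (v $ i * q $ i))"
    using q v by (simp add: scalar_prod_def atLeast0LessThan sum_distrib_left)
  also have "\<dots> \<le> (\<Sum>i<n. (v $ i * v $ i) / lam + lam * (q $ i * q $ i))"
  proof (rule sum_mono)
    fix i
    have "2 * lam * (v $ i * q $ i) \<le> v $ i * v $ i + lam * lam * (q $ i * q $ i)"
      using sum_squares_bound[of "v $ i" "lam * q $ i"]
      by (simp add: power2_eq_square algebra_simps)
    then show "2 * (v $ i * q $ i) \<le> (v $ i * v $ i) / lam + lam * (q $ i * q $ i)"
      using lam by (simp add: field_simps)
  qed
  also have "\<dots> = (v \<bullet> v) / lam + lam * (q \<bullet> q)"
    using q v by (simp add: scalar_prod_def atLeast0LessThan sum.distrib sum_distrib_left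
        sum_divide_distrib)
  finally show ?thesis .
qed

lemma wnorm_sq_minv_Vbar_bounds:
  assumes lam: "lam > 0" and v: "v \<in> carrier_vec n"
  shows "0 \<le> wnorm_sq v (minv (Vbar n lam z t))"
    and "wnorm_sq v (minv (Vbar n lam z t)) \<le> (v \<bullet> v) / lam"
proof -
  define V where "V = Vbar n lam z t"
  define q where "q = minv V *\<^sub>v v"
  define y where "y = v \<bullet> q"
  have W: "minv V \<in> carrier_mat n n" and VW: "V * minv V = 1\<^sub>m n"
    using Vbar_minv[OF lam] unfolding V_def by auto
  have q: "q \<in> carrier_vec n"
    using W v q_def by simp
  have "V *\<^sub>v q = v"
    unfolding q_def using W v VW Vbar_carrier[of n lam z t] unfolding V_def[symmetric]
    by (simp add: assoc_mult_mat_vec[symmetric, of V n n "minv V" n v])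
  then have "y = q \<bullet> (V *\<^sub>v q)"
    unfolding y_def using q v by (simp add: comm_scalar_prod[of q n])
  also have "\<dots> = lam * (q \<bullet> q) + (\<Sum>s\<in>{1..<t}. (z s \<bullet> q)\<^sup>2)"
    unfolding V_def by (rule Vbar_quadratic_form[OF q])
  finally have y_ge: "lam * (q \<bullet> q) \<le> y"
    by (simp add: sum_nonneg)
  have "2 * y \<le> (v \<bullet> v) / lam + lam * (q \<bullet> q)"
    unfolding y_def by (rule two_scalar_prod_le[OF v q lam])
  then have "y \<le> (v \<bullet> v) / lam"
    using y_ge by linarith
  moreover have "0 \<le> lam * (q \<bullet> q)"
    using lam by (simp add: scalar_prod_def sum_nonneg)
  ultimately show "0 \<le> wnorm_sq v (minv (Vbar n lam z t))"
    and "wnorm_sq v (minv (Vbar n lam z t)) \<le> (v \<bullet> v) / lam"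
    using y_ge unfolding wnorm_sq_def y_def q_def V_def by linarith+
qed

lemma det_Vbar_Suc:
  assumes lam: "lam > 0" and z: "\<And>t. t \<in> {1..T} \<Longrightarrow> z t \<in> carrier_vec n"
  shows "det (Vbar n lam z (Suc T))
    = lam ^ n * (\<Prod>t = 1..T. 1 + wnorm_sq (z t) (minv (Vbar n lam z t)))"
  using z
proof (induction T)
  case 0
  then show ?case
    by (simp add: Vbar_1[unfolded One_nat_def])
next
  case (Suc T)
  have "det (Vbar n lam z (Suc (Suc T))) = det (Vbar n lam z (Suc T) + outer_mat n (z (Suc T)))"
    by (simp add: Vbar_Suc)
  also have "\<dots>
      = det (Vbar n lam z (Suc T)) * (1 + wnorm_sq (z (Suc T)) (minv (Vbar n lam z (Suc T))))"
    using Vbar_minv[OF lam] Suc.prems[of "Suc T"] unfolding wnorm_sq_def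
    by (intro det_add_outer_mat) auto
  finally show ?case
    using Suc by simp
qed

lemma mat_trace_Vbar_Suc:
  assumes z: "\<And>t. t \<in> {1..T} \<Longrightarrow> z t \<in> carrier_vec n"
  shows "mat_trace (Vbar n lam z (Suc T)) = n * lam + (\<Sum>t = 1..T. z t \<bullet> z t)"
proof -
  have "mat_trace (Vbar n lam z (Suc T)) = (\<Sum>i<n. lam + (\<Sum>t = 1..T. z t $ i * z t $ i))"
    unfolding mat_trace_def
    by (intro sum.cong) (auto simp: Vbar_index atLeastLessThanSuc_atLeastAtMost)
  also have "\<dots> = n * lam + (\<Sum>t = 1..T. \<Sum>i<n. z t $ i * z t $ i)"
    by (simp add: sum.distrib sum.swap[of _ "{..<n}"])
  also have "(\<Sum>t = 1..T. \<Sum>i<n. z t $ i * z t $ i) = (\<Sum>t = 1..T. z t \<bullet> z t)"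
    by (intro sum.cong refl) (simp add: scalar_prod_def atLeast0LessThan carrier_vecD[OF z])
  finally show ?thesis .
qed

section \<open>The elliptical potential lemma\<close>

lemma sum_ln_one_plus_wnorm_sq_le:
  assumes lam: "lam > 0" and n: "n > 0"
    and z: "\<And>t. t \<in> {1..T} \<Longrightarrow> z t \<in> carrier_vec n"
    and L: "\<And>t. t \<in> {1..T} \<Longrightarrow> z t \<bullet> z t \<le> L"
  shows "(\<Sum>t = 1..T. ln (1 + wnorm_sq (z t) (minv (Vbar n lam z t))))
    \<le> n * ln (1 + T * L / (n * lam))"
proof -
  define y where "y t = wnorm_sq (z t) (minv (Vbar n lam z t))" for t
  define V where "V = Vbar n lam z (Suc T)"
  define c where "c = T * L / (n * lam)"
  have y: "0 < 1 + y t" if "t \<in> {1..T}" for t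
    unfolding y_def using wnorm_sq_minv_Vbar_bounds(1)[OF lam z[OF that], of z t] by linarith
  have "0 \<le> (\<Sum>t = 1..T. z t \<bullet> z t)"
    by (intro sum_nonneg) (simp add: scalar_prod_def sum_nonneg)
  moreover have "(\<Sum>t = 1..T. z t \<bullet> z t) \<le> T * L"
    using sum_mono[of "{1..T}" "\<lambda>t. z t \<bullet> z t" "\<lambda>_. L"] L by simp
  ultimately have tr: "0 \<le> mat_trace V" "mat_trace V \<le> n * lam + T * L" and c: "0 \<le> c"
    using mat_trace_Vbar_Suc[OF z, where lam = lam] lam n unfolding V_def c_def by simp_all
  have "lam ^ n * (\<Prod>t = 1..T. 1 + y t) = det V"
    using det_Vbar_Suc[OF lam z] unfolding y_def V_def by simp
  also have "\<dots> \<le> (mat_trace V / n) ^ n"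
    unfolding V_def using n Vbar_eigenvalue_pos[OF lam] by (intro det_le_mat_trace_power) auto
  also have "\<dots> \<le> ((n * lam + T * L) / n) ^ n"
    using tr by (intro power_mono divide_right_mono) auto
  also have "(n * lam + T * L) / n = lam * (1 + c)"
    unfolding c_def using n lam by (simp add: field_simps)
  finally have "(\<Prod>t = 1..T. 1 + y t) \<le> (1 + c) ^ n"
    using lam by (simp add: power_mult_distrib)
  have "(\<Sum>t = 1..T. ln (1 + y t)) = ln (\<Prod>t = 1..T. 1 + y t)"
    using y by (intro ln_prod[symmetric]) force+
  also have "\<dots> \<le> ln ((1 + c) ^ n)"
    using \<open>(\<Prod>t = 1..T. 1 + y t) \<le> (1 + c) ^ n\<close> y c
    by (subst ln_le_cancel_iff) (auto intro: prod_pos)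
  also have "\<dots> = n * ln (1 + c)"
    using c by (simp add: ln_realpow)
  finally show ?thesis
    unfolding y_def c_def .
qed

lemma le_mult_ln_one_plus:
  fixes y B :: real
  assumes y: "0 \<le> y" and yB: "y \<le> B"
  shows "y \<le> (2 + B / ln 2) * ln (1 + y)"
proof -
  have B: "0 \<le> B / ln 2" and ln_y: "0 \<le> ln (1 + y)"
    using y yB by simp_all
  show ?thesis
  proof (cases "y \<le> 1")
    case True
    have "y / (1 + y) \<le> ln (1 + y)"
      using ln_le_minus_one[of "1 / (1 + y)"] y by (simp add: ln_div field_simps)
    moreover have "y / 2 \<le> y / (1 + y)"
      using y True by (intro divide_left_mono) auto
    ultimately have "y \<le> 2 * ln (1 + y)"
      by linarith
    also have "\<dots> \<le> (2 + B / ln 2) * ln (1 + y)"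
      using B ln_y by (simp add: mult_right_mono)
    finally show ?thesis .
  next
    case False
    then have "B / ln 2 * ln 2 \<le> B / ln 2 * ln (1 + y)"
      using B by (intro mult_left_mono) auto
    then have "B \<le> B / ln 2 * ln (1 + y)"
      by simp
    also have "\<dots> \<le> (2 + B / ln 2) * ln (1 + y)"
      using ln_y by (simp add: distrib_right)
    finally show ?thesis
      using yB by simp
  qed
qed

lemma elliptical_potential:
  assumes lam: "lam > 0" and n: "n > 0"
    and z: "\<And>t. t \<in> {1..T} \<Longrightarrow> z t \<in> carrier_vec n"
    and L: "\<And>t. t \<in> {1..T} \<Longrightarrow> z t \<bullet> z t \<le> L"
  shows "(\<Sum>t = 1..T. wnorm_sq (z t) (minv (Vbar n lam z t)))
    \<le> n * ln (1 + T * L / (n * lam)) * (2 + L / (ln 2 * lam))"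
proof (cases "T = 0")
  case False
  define y where "y t = wnorm_sq (z t) (minv (Vbar n lam z t))" for t
  define K where "K = 2 + L / (ln 2 * lam)"
  have "0 \<le> z 1 \<bullet> z 1"
    by (simp add: scalar_prod_def sum_nonneg)
  then have "0 \<le> K"
    unfolding K_def using L[of 1] False lam by simp
  have "y t \<le> K * ln (1 + y t)" if t: "t \<in> {1..T}" for t
  proof -
    have "y t \<le> (z t \<bullet> z t) / lam"
      unfolding y_def by (rule wnorm_sq_minv_Vbar_bounds(2)[OF lam z[OF t]])
    also have "\<dots> \<le> L / lam"
      using L[OF t] lam by (simp add: divide_right_mono)
    finally show ?thesis
      using le_mult_ln_one_plus[of "y t" "L / lam"]
        wnorm_sq_minv_Vbar_bounds(1)[OF lam z[OF t], of z t]
      unfolding K_def y_def by (simp add: divide_divide_eq_left mult.commute)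
  qed
  then have "(\<Sum>t = 1..T. y t) \<le> K * (\<Sum>t = 1..T. ln (1 + y t))"
    by (auto simp: sum_distrib_left intro!: sum_mono)
  also have "\<dots> \<le> K * (n * ln (1 + T * L / (n * lam)))"
    using sum_ln_one_plus_wnorm_sq_le[OF lam n z L] \<open>0 \<le> K\<close> unfolding y_def
    by (intro mult_left_mono) auto
  finally show ?thesis
    unfolding y_def K_def by (simp add: mult.commute)
qed simp

section \<open>Boundedness of the patient model\<close>

lemma treat_setD:
  assumes "v \<in> treat_set M"
  shows "v \<in> carrier_vec M" "\<And>i. i < M \<Longrightarrow> v $ i = 0 \<or> v $ i = 1" "(\<Sum>i<M. v $ i) \<le> 1"
proof -
  show v: "v \<in> carrier_vec M" and entries: "\<And>i. i < M \<Longrightarrow> v $ i = 0 \<or> v $ i = 1"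
    using assms unfolding treat_set_def by auto
  have "(\<Sum>i<M. v $ i) = (\<Sum>i | i < M \<and> v $ i \<noteq> 0. v $ i)"
    by (intro sum.mono_neutral_right) auto
  also have "\<dots> = (\<Sum>i | i < M \<and> v $ i \<noteq> 0. 1)"
    using entries by (intro sum.cong) force+
  also have "\<dots> = card {i. i < M \<and> v $ i \<noteq> 0}"
    by simp
  also have "\<dots> \<le> 1"
    using assms unfolding treat_set_def by auto
  finally show "(\<Sum>i<M. v $ i) \<le> 1" .
qed

lemma treat_set_scalar_prod_self_le:
  assumes "v \<in> treat_set M"
  shows "v \<bullet> v \<le> 1"
proof -
  note v = treat_setD[OF assms]
  have "v \<bullet> v = (\<Sum>i<M. v $ i * v $ i)"
    using v(1) by (simp add: scalar_prod_def atLeast0LessThan)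
  also have "\<dots> = (\<Sum>i<M. v $ i)"
    using v(2) by (intro sum.cong) force+
  finally show ?thesis
    using v(3) by simp
qed

lemma abs_scalar_prod_treat_set_le:
  assumes v: "v \<in> treat_set M" and b: "sup_norm_le M b r" and r: "0 \<le> r"
  shows "\<bar>b \<bullet> v\<bar> \<le> r"
proof -
  note v = treat_setD[OF v]
  have "\<bar>b \<bullet> v\<bar> = \<bar>\<Sum>i<M. b $ i * v $ i\<bar>"
    using v(1) by (simp add: scalar_prod_def atLeast0LessThan)
  also have "\<dots> \<le> (\<Sum>i<M. \<bar>b $ i * v $ i\<bar>)"
    by (rule sum_abs)
  also have "\<dots> \<le> (\<Sum>i<M. r * v $ i)"
    using v(2) b r unfolding sup_norm_le_def by (intro sum_mono) (force simp: abs_mult)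
  also have "\<dots> \<le> r"
    using v(3) r by (simp add: sum_distrib_left[symmetric] mult_left_le)
  finally show ?thesis .
qed

lemma sup_norm_le_nonneg:
  assumes "sup_norm_le M b r" and "M \<ge> 1"
  shows "0 \<le> r"
  using assms abs_ge_zero[of "b $ 0"] unfolding sup_norm_le_def by force

lemma abs_le_of_contraction:
  fixes x :: "nat \<Rightarrow> real"
  assumes a: "0 \<le> a" "a \<le> abar" "abar < 1"
    and init: "\<bar>x 1\<bar> \<le> K"
    and step: "\<And>t. t \<ge> 1 \<Longrightarrow> \<bar>x (Suc t)\<bar> \<le> a * \<bar>x t\<bar> + K"
    and t: "t \<ge> 1"
  shows "\<bar>x t\<bar> \<le> K / (1 - abar)"
  using t
proof (induction t rule: nat_induct_at_least)
  case base
  have "0 \<le> K"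
    using init abs_ge_zero order_trans by blast
  then have "K \<le> K / (1 - abar)"
    using a by (simp add: le_divide_eq mult_left_le)
  then show ?case
    using init by simp
next
  case (Suc t)
  have "a * \<bar>x t\<bar> \<le> abar * (K / (1 - abar))"
    using Suc.IH a by (intro mult_mono) auto
  moreover have "abar * (K / (1 - abar)) + K = K / (1 - abar)"
    using a by (simp add: field_simps)
  ultimately show ?case
    using step[OF Suc.hyps] by simp
qed

lemma patient_state_abs_le:
  fixes x w :: "nat \<Rightarrow> real" and u d :: "nat \<Rightarrow> real vec"
  assumes M: "M \<ge> 1"
    and a: "0 \<le> a" "a \<le> abar" "abar < 1"
    and b: "sup_norm_le M b bbar" and c: "sup_norm_le M c cbar"
    and noise: "\<And>t. \<bar>w t\<bar> \<le> wbar" and init: "x 1 = w 0"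
    and actions: "\<And>t. t \<ge> 1 \<Longrightarrow> u t \<in> treat_set M"
    and adherence: "\<And>t. t \<ge> 1 \<Longrightarrow> d t \<in> treat_set M"
    and dyn: "\<And>t. t \<ge> 1 \<Longrightarrow> x (t + 1) = a * x t + b \<bullet> u t + c \<bullet> d t + w t"
    and t: "t \<ge> 1"
  shows "\<bar>x t\<bar> \<le> (bbar + cbar + wbar) / (1 - abar)"
proof (rule abs_le_of_contraction[OF a _ _ t])
  have "0 \<le> bbar" "0 \<le> cbar"
    using sup_norm_le_nonneg M b c by auto
  then show "\<bar>x 1\<bar> \<le> bbar + cbar + wbar"
    using init noise[of 0] by simp
  fix t :: nat
  assume "t \<ge> 1"
  then have "\<bar>b \<bullet> u t\<bar> \<le> bbar" "\<bar>c \<bullet> d t\<bar> \<le> cbar"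
    and "x (Suc t) = a * x t + b \<bullet> u t + c \<bullet> d t + w t"
    using abs_scalar_prod_treat_set_le[OF actions b \<open>0 \<le> bbar\<close>]
      abs_scalar_prod_treat_set_le[OF adherence c \<open>0 \<le> cbar\<close>] dyn
    by simp_all
  moreover have "\<bar>a * x t\<bar> = a * \<bar>x t\<bar>"
    using a by (simp add: abs_mult)
  ultimately
  show "\<bar>x (Suc t)\<bar> \<le> a * \<bar>x t\<bar> + (bbar + cbar + wbar)"
    using noise[of t] by linarith
qed

lemma zvec_carrier:
  assumes "u \<in> carrier_vec M" "d \<in> carrier_vec M"
  shows "zvec x u d \<in> carrier_vec (2 * M + 1)"
proof -
  have "zvec x u d \<in> carrier_vec (1 + (M + M))"
    unfolding zvec_def using assms by (intro append_carrier_vec) auto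
  then show ?thesis
    by (simp add: add.commute mult_2)
qed

lemma zvec_scalar_prod_self:
  assumes "u \<in> carrier_vec M" "d \<in> carrier_vec M"
  shows "zvec x u d \<bullet> zvec x u d = x\<^sup>2 + u \<bullet> u + d \<bullet> d"
proof -
  have "zvec x u d \<bullet> zvec x u d = vec 1 (\<lambda>_. x) \<bullet> vec 1 (\<lambda>_. x) + (u \<bullet> u + d \<bullet> d)"
    unfolding zvec_def using assms
    by (simp add: scalar_prod_append[of _ 1 _ "M + M"] scalar_prod_append[of _ M _ M])
  also have "vec 1 (\<lambda>_. x) \<bullet> vec 1 (\<lambda>_. x) = x\<^sup>2"
    by (simp add: scalar_prod_def power2_eq_square)
  finally show ?thesis
    by simp
qed

lemma zvec_scalar_prod_self_le:
  assumes x: "\<bar>x\<bar> \<le> C" and u: "u \<in> treat_set M" and d: "d \<in> treat_set M"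
  shows "zvec x u d \<bullet> zvec x u d \<le> C\<^sup>2 + 2"
proof -
  have "x\<^sup>2 \<le> C\<^sup>2"
    using power_mono[OF x abs_ge_zero, of 2] by simp
  then show ?thesis
    using zvec_scalar_prod_self[OF treat_setD(1)[OF u] treat_setD(1)[OF d], of x]
      treat_set_scalar_prod_self_le[OF u] treat_set_scalar_prod_self_le[OF d]
    by linarith
qed

theorem mainTheorem16:
  fixes M :: nat and abar bbar cbar wbar a lam1 :: real
    and b c :: "real vec"
    and x :: "nat \<Rightarrow> real" and w :: "nat \<Rightarrow> real"
    and u d :: "nat \<Rightarrow> real vec" and T :: nat
  assumes M: "M \<ge> 1"
    and abar: "0 < abar" "abar < 1"
    and wbar: "wbar > 0"
    and a: "0 \<le> a" "a \<le> abar"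
    and b: "sup_norm_le M b bbar"
    and c: "sup_norm_le M c cbar"
    and noise: "\<And>t. \<bar>w t\<bar> \<le> wbar"
    and init: "x 1 = w 0"
    and actions: "\<And>t. t \<ge> 1 \<Longrightarrow> u t \<in> treat_set M"
    and adherence: "\<And>t. t \<ge> 1 \<Longrightarrow> d t \<in> treat_set M"
    and adh_support: "\<And>t i. t \<ge> 1 \<Longrightarrow> i < M \<Longrightarrow> d t $ i \<le> u t $ i"
    and dyn: "\<And>t. t \<ge> 1 \<Longrightarrow> x (t + 1) = a * x t + b \<bullet> u t + c \<bullet> d t + w t"
    and lam1: "lam1 > 0"
  shows "(let Cx = (bbar + cbar + wbar) / (1 - abar);
              n = 2 * M + 1;
              z = (\<lambda>t. zvec (x t) (u t) (d t))
          in (\<Sum>t = 1..T. wnorm_sq (z t) (minv (Vbar n lam1 z t)))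
             \<le> real n * ln (1 + real T * (Cx\<^sup>2 + 2) / (real n * lam1))
               * (2 + (Cx\<^sup>2 + 2) / (ln 2 * lam1)))"
proof -
  define Cx where "Cx = (bbar + cbar + wbar) / (1 - abar)"
  define z where "z t = zvec (x t) (u t) (d t)" for t
  have "z t \<in> carrier_vec (2 * M + 1)" "z t \<bullet> z t \<le> Cx\<^sup>2 + 2" if "t \<in> {1..T}" for t
  proof -
    have t: "t \<ge> 1"
      using that by simp
    have "\<bar>x t\<bar> \<le> Cx"
      unfolding Cx_def
      by (rule patient_state_abs_le[OF M a abar(2) b c noise init actions adherence dyn t])
    then show "z t \<in> carrier_vec (2 * M + 1)" "z t \<bullet> z t \<le> Cx\<^sup>2 + 2"
      unfolding z_def
      using zvec_carrier treat_setD(1) zvec_scalar_prod_self_le actions[OF t] adherence[OF t]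
      by auto
  qed
  then show ?thesis
    using elliptical_potential[OF lam1, of "2 * M + 1" T z "Cx\<^sup>2 + 2"]
    unfolding Let_def Cx_def[symmetric] z_def[abs_def, symmetric] by simp
qed

end
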